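(* Let $G=\mathbb{R}^6$ with coordinates $(y_1,y_2,z_1,z_2,v_1,v_2)$ and multiplication $(y',z',v')\cdot(y,z,v)=\big(y_1+y_1',y_2+y_2',z_1+z_1',z_2+z_2',\ v_1+v_1'+(y_1'-y_2')z_1-(y_1'+2y_2')z_2,\ v_2+v_2'-(2y_1'+y_2')z_1+(y_2'-y_1')z_2\big)$, and let $\Gamma=\{(y_1,y_2,z_1,z_2,v_1,v_2)\in\mathbb{Z}^6: v_1\equiv v_2\pmod 3\}$ and $N=\Gamma\backslash G$. Let $H_{\mathbb{C}}$ be the complex Heisenberg group of complex matrices $\begin{pmatrix}1&u_2&u_3\\0&1&u_1\\0&0&1\end{pmatrix}$, let $\Lambda=\mathbb{Z}\langle1,\zeta\rangle\subset\mathbb{C}$ with $\zeta=e^{2\pi i/3}$, and let $\Gamma_H\subset H_{\mathbb{C}}$ be the subgroup of matrices with $u_1,u_2,u_3\in\Lambda$. Then there is an isomorphism of Lie groups $G\to H_{\mathbb{C}}$ carrying $\Gamma$ onto $\Gamma_H$; in particular $N$ is diffeomorphic to $\Gamma_H\backslash H_{\mathbb{C}}$.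
   Context: $\Gamma$ is a discrete subgroup of $G$ and the quotient is by left multiplication. *)

theory Defs
  imports "HOL-Analysis.Analysis"
begin

text \<open>D vs x is the iterated
  derivative of f at x applied to the directions in the list vs.\<close>
definition smooth_map :: "('a::real_normed_vector \<Rightarrow> 'b::real_normed_vector) \<Rightarrow> bool" where
  "smooth_map f \<longleftrightarrow> (\<exists>D :: 'a list \<Rightarrow> 'a \<Rightarrow> 'b.
      D [] = f \<and>
      (\<forall>vs x. (D vs has_derivative (\<lambda>v. D (v # vs) x)) (at x)) \<and>
      (\<forall>vs. continuous_on UNIV (D vs)))"

type_synonym G6 = "real \<times> real \<times> real \<times> real \<times> real \<times> real"

fun gmult :: "G6 \<Rightarrow> G6 \<Rightarrow> G6" where
  "gmult (y1', y2', z1', z2', v1', v2') (y1, y2, z1, z2, v1, v2) =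
     (y1 + y1', y2 + y2', z1 + z1', z2 + z2',
      v1 + v1' + (y1' - y2') * z1 - (y1' + 2 * y2') * z2,
      v2 + v2' - (2 * y1' + y2') * z1 + (y2' - y1') * z2)"

definition Gamma :: "G6 set" where
  "Gamma = {(real_of_int a1, real_of_int a2, real_of_int b1, real_of_int b2,
             real_of_int c1, real_of_int c2) | a1 a2 b1 b2 c1 c2.
             c1 mod 3 = c2 mod 3}"

definition heis :: "complex \<Rightarrow> complex \<Rightarrow> complex \<Rightarrow> complex^3^3" where
  "heis u1 u2 u3 = vector [vector [1, u2, u3], vector [0, 1, u1], vector [0, 0, 1]]"

definition H_C :: "(complex^3^3) set" where
  "H_C = {heis u1 u2 u3 | u1 u2 u3. True}"

definition zeta :: complex where
  "zeta = cis (2 * pi / 3)"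

definition Lambda :: "complex set" where
  "Lambda = {of_int a + of_int b * zeta | a b. True}"

definition Gamma_H :: "(complex^3^3) set" where
  "Gamma_H = {heis u1 u2 u3 | u1 u2 u3. u1 \<in> Lambda \<and> u2 \<in> Lambda \<and> u3 \<in> Lambda}"

end

theory Submission
  imports Defs
begin

text \<open>Identify \<open>\<real>\<^sup>2\<close> with \<open>\<complex>\<close> via the real basis \<open>1, \<zeta>\<close>, which makes the lattice \<open>\<int>\<^sup>2\<close>
  correspond to \<open>\<Lambda>\<close>. Sending \<open>(y,z,v)\<close> to the Heisenberg matrix with \<open>u\<^sub>2 = y\<^sub>1 - y\<^sub>2\<zeta>\<close>,
  \<open>u\<^sub>1 = z\<^sub>1 - z\<^sub>2\<zeta>\<close> and \<open>u\<^sub>3 = (v\<^sub>1 - v\<^sub>2)/3 + (2v\<^sub>1 + v\<^sub>2)/3 \<cdot> \<zeta>\<close> is a real-affine bijection onto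
  \<open>H\<^sub>\<complex>\<close>; because \<open>\<zeta>\<^sup>2 = -1 - \<zeta>\<close>, the matrix cross term \<open>u\<^sub>2' u\<^sub>1\<close> is exactly the bilinear
  part of the group law of \<open>G\<close>, so the map is a homomorphism. Affine maps are smooth, and
  the coefficients of \<open>u\<^sub>3\<close> are integers precisely when \<open>v\<^sub>1, v\<^sub>2\<close> are integers congruent
  modulo 3, so \<open>\<Gamma>\<close> is carried onto \<open>\<Gamma>\<^sub>H\<close>.\<close>

lemma smooth_map_affine:
  fixes L :: "'a::real_normed_vector \<Rightarrow> 'b::real_normed_vector"
  assumes L: "bounded_linear L"
  shows "smooth_map (\<lambda>x. c + L x)"
proof -
  define D :: "'a list \<Rightarrow> 'a \<Rightarrow> 'b" where
    "D = (\<lambda>vs. case vs of [] \<Rightarrow> (\<lambda>x. c + L x) | [v] \<Rightarrow> (\<lambda>x. L v) | _ \<Rightarrow> (\<lambda>x. 0))"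
  have "(D vs has_derivative (\<lambda>v. D (v # vs) x)) (at x)" for vs x
  proof (cases vs)
    case Nil
    have "((\<lambda>x. c + L x) has_derivative (\<lambda>v. 0 + L v)) (at x)"
      by (intro has_derivative_add has_derivative_const bounded_linear_imp_has_derivative L)
    then show ?thesis using Nil by (simp add: D_def)
  next
    case (Cons w ws)
    then show ?thesis by (cases ws) (auto simp: D_def intro!: derivative_eq_intros)
  qed
  moreover have "continuous_on UNIV (D vs)" for vs
  proof (cases vs)
    case Nil
    then show ?thesis
      using continuous_on_add[OF continuous_on_const linear_continuous_on[OF L]]
      by (simp add: D_def)
  next
    case (Cons w ws)
    then show ?thesis by (cases ws) (auto simp: D_def)
  qed
  moreover have "D [] = (\<lambda>x. c + L x)" by (simp add: D_def)
  ultimately show ?thesis unfolding smooth_map_def by blast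
qed

lemma smooth_map_affine_euclidean:
  fixes f :: "'a::euclidean_space \<Rightarrow> 'b::real_normed_vector"
  assumes "linear (\<lambda>x. f x - f 0)"
  shows "smooth_map f"
proof -
  have "smooth_map (\<lambda>x. f 0 + (f x - f 0))"
    using assms by (intro smooth_map_affine) (simp add: linear_conv_bounded_linear)
  then show ?thesis
    by simp
qed

lemma heis_nth [simp]:
  "heis u1 u2 u3 $ 1 $ 1 = 1" "heis u1 u2 u3 $ 1 $ 2 = u2" "heis u1 u2 u3 $ 1 $ 3 = u3"
  "heis u1 u2 u3 $ 2 $ 1 = 0" "heis u1 u2 u3 $ 2 $ 2 = 1" "heis u1 u2 u3 $ 2 $ 3 = u1"
  "heis u1 u2 u3 $ 3 $ 1 = 0" "heis u1 u2 u3 $ 3 $ 2 = 0" "heis u1 u2 u3 $ 3 $ 3 = 1"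
  by (simp_all add: heis_def)

lemma heis_eq_iff: "heis a1 a2 a3 = heis b1 b2 b3 \<longleftrightarrow> a1 = b1 \<and> a2 = b2 \<and> a3 = b3"
  by (metis heis_nth)

lemma heis_mult: "heis a1 a2 a3 ** heis b1 b2 b3 = heis (a1 + b1) (a2 + b2) (a3 + b3 + a2 * b1)"
  by (simp add: vec_eq_iff forall_3 matrix_matrix_mult_def sum_3)

lemma heis_in_Gamma_H_iff:
  "heis u1 u2 u3 \<in> Gamma_H \<longleftrightarrow> u1 \<in> Lambda \<and> u2 \<in> Lambda \<and> u3 \<in> Lambda"
  by (auto simp: Gamma_H_def heis_eq_iff)

lemma zeta_eq: "zeta = Complex (-1/2) (sqrt 3 / 2)"
  by (simp add: zeta_def complex_eq_iff cos_120 sin_120)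

lemma of_real_plus_zeta_eq_iff:
  "of_real a + of_real b * zeta = of_real c + of_real d * zeta \<longleftrightarrow> a = c \<and> b = d"
  by (auto simp: zeta_eq complex_eq_iff)

lemma of_real_plus_zeta_in_Lambda_iff:
  "of_real a + of_real b * zeta \<in> Lambda \<longleftrightarrow> a \<in> \<int> \<and> b \<in> \<int>"
proof
  assume "of_real a + of_real b * zeta \<in> Lambda"
  then obtain m n :: int where "of_real a + of_real b * zeta = of_real (of_int m) + of_real (of_int n) * zeta"
    by (auto simp: Lambda_def)
  then show "a \<in> \<int> \<and> b \<in> \<int>"
    by (simp only: of_real_plus_zeta_eq_iff) auto
next
  assume "a \<in> \<int> \<and> b \<in> \<int>"
  then show "of_real a + of_real b * zeta \<in> Lambda"
    by (fastforce simp: Lambda_def elim!: Ints_cases)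
qed

lemma of_real_minus_zeta_in_Lambda_iff:
  "of_real a - of_real b * zeta \<in> Lambda \<longleftrightarrow> a \<in> \<int> \<and> b \<in> \<int>"
  using of_real_plus_zeta_in_Lambda_iff[of a "- b"] by simp

text \<open>The coordinates \<open>(v\<^sub>1 - v\<^sub>2)/3\<close> and \<open>(2v\<^sub>1 + v\<^sub>2)/3\<close> recover \<open>v\<^sub>1\<close> as their sum and \<open>v\<^sub>2\<close> as
  the second minus twice the first.\<close>
lemma mem_Gamma_iff:
  "(y1, y2, z1, z2, v1, v2) \<in> Gamma \<longleftrightarrow>
     y1 \<in> \<int> \<and> y2 \<in> \<int> \<and> z1 \<in> \<int> \<and> z2 \<in> \<int> \<and> (v1 - v2) / 3 \<in> \<int> \<and> (2 * v1 + v2) / 3 \<in> \<int>"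
proof
  assume "(y1, y2, z1, z2, v1, v2) \<in> Gamma"
  then obtain a1 a2 b1 b2 c1 c2 :: int where
    p: "(y1, y2, z1, z2, v1, v2) = (of_int a1, of_int a2, of_int b1, of_int b2, of_int c1, of_int c2)"
    and c: "c1 mod 3 = c2 mod 3"
    by (auto simp: Gamma_def)
  obtain k where k: "c1 - c2 = 3 * k"
    using c by (metis mod_eq_dvd_iff dvd_def)
  then have "real_of_int c1 - real_of_int c2 = 3 * real_of_int k"
    by (metis of_int_diff of_int_mult of_int_numeral)
  then have "(v1 - v2) / 3 = of_int k" "(2 * v1 + v2) / 3 = of_int (c1 - k)"
    using p by (auto simp: field_simps)
  moreover have "y1 \<in> \<int> \<and> y2 \<in> \<int> \<and> z1 \<in> \<int> \<and> z2 \<in> \<int>"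
    using p by auto
  ultimately show "y1 \<in> \<int> \<and> y2 \<in> \<int> \<and> z1 \<in> \<int> \<and> z2 \<in> \<int> \<and> (v1 - v2) / 3 \<in> \<int> \<and> (2 * v1 + v2) / 3 \<in> \<int>"
    by (metis Ints_of_int)
next
  assume "y1 \<in> \<int> \<and> y2 \<in> \<int> \<and> z1 \<in> \<int> \<and> z2 \<in> \<int> \<and> (v1 - v2) / 3 \<in> \<int> \<and> (2 * v1 + v2) / 3 \<in> \<int>"
  then obtain a1 a2 b1 b2 m n :: int where
    ints: "y1 = of_int a1" "y2 = of_int a2" "z1 = of_int b1" "z2 = of_int b2"
      "(v1 - v2) / 3 = of_int m" "(2 * v1 + v2) / 3 = of_int n"
    by (metis Ints_cases)
  then have "v1 = of_int (m + n)" "v2 = of_int (n - 2 * m)"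
    by (simp_all add: field_simps)
  moreover have "(m + n) mod 3 = (n - 2 * m) mod 3"
    by (simp add: mod_eq_dvd_iff)
  ultimately show "(y1, y2, z1, z2, v1, v2) \<in> Gamma"
    unfolding Gamma_def using ints by blast
qed

definition to_heis :: "G6 \<Rightarrow> complex^3^3" where
  "to_heis p = (case p of (y1, y2, z1, z2, v1, v2) \<Rightarrow>
     heis (of_real z1 - of_real z2 * zeta) (of_real y1 - of_real y2 * zeta)
          (of_real ((v1 - v2) / 3) + of_real ((2 * v1 + v2) / 3) * zeta))"

text \<open>Since \<open>\<zeta> = -1/2 + (\<surd>3/2)i\<close>, the real coordinates of \<open>u = a + b\<zeta>\<close> are
  \<open>b = 2 Im u/\<surd>3\<close> and \<open>a = Re u + Im u/\<surd>3\<close>; for \<open>u\<^sub>3\<close> one then takes \<open>v\<^sub>1 = a + b\<close>, \<open>v\<^sub>2 = b - 2a\<close>.\<close>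
definition of_heis :: "complex^3^3 \<Rightarrow> G6" where
  "of_heis M = (Re (M$1$2) + Im (M$1$2) / sqrt 3, - 2 * Im (M$1$2) / sqrt 3,
                Re (M$2$3) + Im (M$2$3) / sqrt 3, - 2 * Im (M$2$3) / sqrt 3,
                Re (M$1$3) + sqrt 3 * Im (M$1$3), - 2 * Re (M$1$3))"

lemma to_heis_in_H_C: "to_heis p \<in> H_C"
  by (auto simp: H_C_def to_heis_def split: prod.splits)

lemma of_heis_to_heis: "of_heis (to_heis p) = p"
  by (cases p) (simp add: of_heis_def to_heis_def zeta_eq field_simps)

lemma to_heis_of_heis:
  assumes "M \<in> H_C"
  shows "to_heis (of_heis M) = M"
  using assms
  by (auto simp: H_C_def of_heis_def to_heis_def zeta_eq heis_eq_iff complex_eq_iff field_simps)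

lemma to_heis_gmult: "to_heis (gmult p q) = to_heis p ** to_heis q"
  by (cases p; cases q)
    (simp add: to_heis_def heis_mult heis_eq_iff zeta_eq complex_eq_iff field_simps;
     simp add: algebra_simps)

lemma smooth_map_to_heis: "smooth_map to_heis"
proof (rule smooth_map_affine_euclidean, rule linearI)
  fix p q :: G6
  show "to_heis (p + q) - to_heis 0 = to_heis p - to_heis 0 + (to_heis q - to_heis 0)"
    by (cases p; cases q) (simp add: to_heis_def zero_prod_def vec_eq_iff forall_3
        algebra_simps add_divide_distrib diff_divide_distrib)
next
  fix r :: real and p :: G6
  show "to_heis (r *\<^sub>R p) - to_heis 0 = r *\<^sub>R (to_heis p - to_heis 0)"
    by (cases p) (simp add: to_heis_def zero_prod_def vec_eq_iff forall_3;
        simp add: scaleR_conv_of_real algebra_simps add_divide_distrib diff_divide_distrib)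
qed

lemma smooth_map_of_heis: "smooth_map of_heis"
proof (rule smooth_map_affine_euclidean)
  have "of_heis 0 = 0"
    by (simp add: of_heis_def zero_prod_def)
  moreover have "linear of_heis"
    by (rule linearI) (simp_all add: of_heis_def add_divide_distrib diff_divide_distrib ring_distribs)
  ultimately show "linear (\<lambda>M. of_heis M - of_heis 0)"
    by simp
qed

lemma to_heis_in_Gamma_H_iff: "to_heis p \<in> Gamma_H \<longleftrightarrow> p \<in> Gamma"
  by (cases p) (simp only: to_heis_def prod.case heis_in_Gamma_H_iff mem_Gamma_iff
      of_real_plus_zeta_in_Lambda_iff of_real_minus_zeta_in_Lambda_iff; blast)

lemma image_to_heis_Gamma: "to_heis ` Gamma = Gamma_H"
proof -
  have "Gamma_H \<subseteq> H_C"
    by (auto simp: Gamma_H_def H_C_def)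
  also have "H_C \<subseteq> range to_heis"
    using to_heis_of_heis by (metis rangeI subsetI)
  finally have "Gamma_H \<subseteq> range to_heis" .
  then show ?thesis
    using to_heis_in_Gamma_H_iff by (auto simp flip: vimage_def)
qed

theorem lemma3p1:
  "\<exists>(f :: G6 \<Rightarrow> complex^3^3) (g :: complex^3^3 \<Rightarrow> G6).
     (\<forall>p. f p \<in> H_C) \<and>
     (\<forall>p. g (f p) = p) \<and>
     (\<forall>M\<in>H_C. f (g M) = M) \<and>
     (\<forall>p q. f (gmult p q) = f p ** f q) \<and>
     smooth_map f \<and> smooth_map g \<and>
     f ` Gamma = Gamma_H"
  using to_heis_in_H_C of_heis_to_heis to_heis_of_heis to_heis_gmult
    smooth_map_to_heis smooth_map_of_heis image_to_heis_Gamma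
  by blast

end
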